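(* The variety $\mathsf{V}(S_{(4,453)})$ is the ai-semiring variety defined by the identities $x^2y\approx xy$, $xy^2\approx xy$, $xyz\approx xzy$, $x^2\approx x^2+x$, $xy\approx xy+xyz$, $x+yz\approx x+yz+yx$.
   Context: An ai-semiring is an algebra $(S,+,\cdot)$ with $(S,+)$ a semilattice, $(S,\cdot)$ a semigroup, and both distributive laws. $\mathsf{V}(S)$ is the variety generated by $S$; "the ai-semiring variety defined by identities $\Sigma$" is the class of all ai-semirings satisfying $\Sigma$. $S_{(4,453)}$ has carrier $\{1,2,3,4\}$; addition: $x+x=x$, $2+x=x$, $1+x=1$ for all $x$, $3+4=1$; multiplication (row $a$, column $b$ gives $a\cdot b$): row $1$: $1,4,1,4$; row $2$: $2,2,2,2$; row $3$: $1,4,1,4$; row $4$: $4,4,4,4$. *)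

theory Defs
  imports "HOL-Library.FuncSet"
begin

text \<open>An algebra of type (2,2) is given by a carrier set C and two binary operations
  p (addition) and m (multiplication); only their behaviour on C matters.\<close>

definition ai_semiring :: "'a set \<Rightarrow> ('a \<Rightarrow> 'a \<Rightarrow> 'a) \<Rightarrow> ('a \<Rightarrow> 'a \<Rightarrow> 'a) \<Rightarrow> bool" where
  "ai_semiring C p m \<longleftrightarrow>
     (\<forall>x\<in>C. \<forall>y\<in>C. p x y \<in> C \<and> m x y \<in> C) \<and>
     (\<forall>x\<in>C. p x x = x) \<and>
     (\<forall>x\<in>C. \<forall>y\<in>C. p x y = p y x) \<and>
     (\<forall>x\<in>C. \<forall>y\<in>C. \<forall>z\<in>C. p (p x y) z = p x (p y z)) \<and>
     (\<forall>x\<in>C. \<forall>y\<in>C. \<forall>z\<in>C. m (m x y) z = m x (m y z)) \<and>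
     (\<forall>x\<in>C. \<forall>y\<in>C. \<forall>z\<in>C. m x (p y z) = p (m x y) (m x z)) \<and>
     (\<forall>x\<in>C. \<forall>y\<in>C. \<forall>z\<in>C. m (p x y) z = p (m x z) (m y z))"

definition sat_Sigma :: "'a set \<Rightarrow> ('a \<Rightarrow> 'a \<Rightarrow> 'a) \<Rightarrow> ('a \<Rightarrow> 'a \<Rightarrow> 'a) \<Rightarrow> bool" where
  "sat_Sigma C p m \<longleftrightarrow>
     (\<forall>x\<in>C. \<forall>y\<in>C. m (m x x) y = m x y) \<and>
     (\<forall>x\<in>C. \<forall>y\<in>C. m x (m y y) = m x y) \<and>
     (\<forall>x\<in>C. \<forall>y\<in>C. \<forall>z\<in>C. m (m x y) z = m (m x z) y) \<and>
     (\<forall>x\<in>C. m x x = p (m x x) x) \<and>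
     (\<forall>x\<in>C. \<forall>y\<in>C. \<forall>z\<in>C. m x y = p (m x y) (m (m x y) z)) \<and>
     (\<forall>x\<in>C. \<forall>y\<in>C. \<forall>z\<in>C. p x (m y z) = p (p x (m y z)) (m y x))"

definition S4 :: "nat set" where "S4 = {1,2,3,4}"

definition plus4 :: "nat \<Rightarrow> nat \<Rightarrow> nat" where
  "plus4 x y = (if x = y then x else if x = 2 then y else if y = 2 then x else 1)"

definition times4 :: "nat \<Rightarrow> nat \<Rightarrow> nat" where
  "times4 x y = (if x = 2 then 2 else if x = 4 then 4 else if y = 1 \<or> y = 3 then 1 else 4)"

definition pplus :: "'i set \<Rightarrow> ('i \<Rightarrow> nat) \<Rightarrow> ('i \<Rightarrow> nat) \<Rightarrow> ('i \<Rightarrow> nat)" where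
  "pplus I f g = (\<lambda>i. if i \<in> I then plus4 (f i) (g i) else undefined)"

definition ptimes :: "'i set \<Rightarrow> ('i \<Rightarrow> nat) \<Rightarrow> ('i \<Rightarrow> nat) \<Rightarrow> ('i \<Rightarrow> nat)" where
  "ptimes I f g = (\<lambda>i. if i \<in> I then times4 (f i) (g i) else undefined)"

text \<open>(C,p,m) is a homomorphic image (via h) of a subalgebra B of the direct power S4^I,
  i.e. it lies in HSP(S4) witnessed by the index set I.\<close>
definition hsp_image ::
  "'i set \<Rightarrow> ('i \<Rightarrow> nat) set \<Rightarrow> (('i \<Rightarrow> nat) \<Rightarrow> 'a) \<Rightarrow> 'a set \<Rightarrow> ('a \<Rightarrow> 'a \<Rightarrow> 'a) \<Rightarrow> ('a \<Rightarrow> 'a \<Rightarrow> 'a) \<Rightarrow> bool" where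
  "hsp_image I B h C p m \<longleftrightarrow>
     B \<subseteq> (PiE I (\<lambda>_. S4)) \<and>
     (\<forall>f\<in>B. \<forall>g\<in>B. pplus I f g \<in> B \<and> ptimes I f g \<in> B) \<and>
     h ` B = C \<and>
     (\<forall>f\<in>B. \<forall>g\<in>B. h (pplus I f g) = p (h f) (h g) \<and> h (ptimes I f g) = m (h f) (h g))"

end

theory Submission
  imports Defs
begin

text \<open>
  The ai-semiring axioms and the identities of Sigma hold in S_(4,453), and identities are
  preserved by direct powers, subalgebras and homomorphic images.

  Conversely, a model C of Sigma lies in V(S_(4,453)) as soon as every identity s = t of
  S_(4,453) holds in C: then C is a homomorphic image of the algebra of S_(4,453)-term
  functions in the variables C, which is a subalgebra of a direct power of S_(4,453).
  Every term is a join of monomials x y_1 ... y_k. Let s = t hold in S_(4,453) and let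
  x y_1 ... y_k be a monomial of t. Evaluating at the assignment that sends x, y_1, ..., y_k
  to 3 and every other variable to 2 yields a monomial of s all of whose letters are among
  x, y_1, ..., y_k; if k > 0, sending only x to 3 yields a monomial x z_1 ... z_l of s with
  l > 0. Modulo Sigma the value of a monomial depends only on its first letter and on the set
  of the remaining ones, and it decreases as this set grows; with x <= x^2 and
  yx <= x + yz this lets the two monomials of s absorb x y_1 ... y_k. Hence t <= s in C, and
  s = t by symmetry.
\<close>

section \<open>Terms and identities\<close>

datatype 'v trm = Var 'v | Add "'v trm" "'v trm" | Mult "'v trm" "'v trm"

fun eval :: "('a \<Rightarrow> 'a \<Rightarrow> 'a) \<Rightarrow> ('a \<Rightarrow> 'a \<Rightarrow> 'a) \<Rightarrow> ('v \<Rightarrow> 'a) \<Rightarrow> 'v trm \<Rightarrow> 'a" where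
  "eval p m \<phi> (Var x) = \<phi> x"
| "eval p m \<phi> (Add s t) = p (eval p m \<phi> s) (eval p m \<phi> t)"
| "eval p m \<phi> (Mult s t) = m (eval p m \<phi> s) (eval p m \<phi> t)"

fun vars :: "'v trm \<Rightarrow> 'v set" where
  "vars (Var x) = {x}"
| "vars (Add s t) = vars s \<union> vars t"
| "vars (Mult s t) = vars s \<union> vars t"

definition closed :: "'a set \<Rightarrow> ('a \<Rightarrow> 'a \<Rightarrow> 'a) \<Rightarrow> ('a \<Rightarrow> 'a \<Rightarrow> 'a) \<Rightarrow> bool" where
  "closed C p m \<longleftrightarrow> (\<forall>x\<in>C. \<forall>y\<in>C. p x y \<in> C \<and> m x y \<in> C)"

definition satisfies :: "'a set \<Rightarrow> ('a \<Rightarrow> 'a \<Rightarrow> 'a) \<Rightarrow> ('a \<Rightarrow> 'a \<Rightarrow> 'a) \<Rightarrow> 'v trm \<Rightarrow> 'v trm \<Rightarrow> bool" where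
  "satisfies C p m s t \<longleftrightarrow> (\<forall>\<phi>. range \<phi> \<subseteq> C \<longrightarrow> eval p m \<phi> s = eval p m \<phi> t)"

lemma vars_nonempty: "vars t \<noteq> {}"
  by (induction t) auto

lemma eval_cong: "(\<And>x. x \<in> vars t \<Longrightarrow> \<phi> x = \<psi> x) \<Longrightarrow> eval p m \<phi> t = eval p m \<psi> t"
  by (induction t) auto

lemma eval_closed_on: "closed C p m \<Longrightarrow> \<phi> ` vars t \<subseteq> C \<Longrightarrow> eval p m \<phi> t \<in> C"
  by (induction t) (auto simp: closed_def)

lemma eval_closed: "closed C p m \<Longrightarrow> range \<phi> \<subseteq> C \<Longrightarrow> eval p m \<phi> t \<in> C"
  by (erule eval_closed_on) blast

lemma satisfies_eval_id:
  assumes "satisfies C p m s t" and "vars s \<subseteq> C" and "vars t \<subseteq> C"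
  shows "eval p m id s = eval p m id t"
proof -
  obtain c where "c \<in> C" using assms(2) vars_nonempty[of s] by blast
  define \<phi> where "\<phi> x = (if x \<in> C then x else c)" for x
  have "range \<phi> \<subseteq> C" using \<open>c \<in> C\<close> by (auto simp: \<phi>_def)
  then have "eval p m \<phi> s = eval p m \<phi> t" using assms(1) by (simp add: satisfies_def)
  moreover have "eval p m \<phi> u = eval p m id u" if "vars u \<subseteq> C" for u
    using that by (intro eval_cong) (auto simp: \<phi>_def)
  ultimately show ?thesis using assms(2,3) by simp
qed

datatype var3 = X | Y | Z

lemma satisfies_var3:
  fixes s t :: "var3 trm"
  shows "satisfies C p m s t \<longleftrightarrow>
    (\<forall>x\<in>C. \<forall>y\<in>C. \<forall>z\<in>C. eval p m (case_var3 x y z) s = eval p m (case_var3 x y z) t)"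
proof
  assume "satisfies C p m s t"
  then show "\<forall>x\<in>C. \<forall>y\<in>C. \<forall>z\<in>C. eval p m (case_var3 x y z) s = eval p m (case_var3 x y z) t"
  proof (intro ballI)
    fix x y z assume "x \<in> C" "y \<in> C" "z \<in> C"
    then have "range (case_var3 x y z) \<subseteq> C" by (auto split: var3.split)
    with \<open>satisfies C p m s t\<close> show "eval p m (case_var3 x y z) s = eval p m (case_var3 x y z) t"
      by (simp add: satisfies_def)
  qed
next
  assume H: "\<forall>x\<in>C. \<forall>y\<in>C. \<forall>z\<in>C. eval p m (case_var3 x y z) s = eval p m (case_var3 x y z) t"
  show "satisfies C p m s t"
    unfolding satisfies_def
  proof (intro allI impI)
    fix \<phi> :: "var3 \<Rightarrow> 'a" assume "range \<phi> \<subseteq> C"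
    moreover have "\<phi> = case_var3 (\<phi> X) (\<phi> Y) (\<phi> Z)" by (rule ext) (simp split: var3.split)
    ultimately show "eval p m \<phi> s = eval p m \<phi> t" using H by (metis range_subsetD)
  qed
qed

definition ai_semiring_identities :: "(var3 trm \<times> var3 trm) list" where
  "ai_semiring_identities =
    [(Add (Var X) (Var X), Var X),
     (Add (Var X) (Var Y), Add (Var Y) (Var X)),
     (Add (Add (Var X) (Var Y)) (Var Z), Add (Var X) (Add (Var Y) (Var Z))),
     (Mult (Mult (Var X) (Var Y)) (Var Z), Mult (Var X) (Mult (Var Y) (Var Z))),
     (Mult (Var X) (Add (Var Y) (Var Z)), Add (Mult (Var X) (Var Y)) (Mult (Var X) (Var Z))),
     (Mult (Add (Var X) (Var Y)) (Var Z), Add (Mult (Var X) (Var Z)) (Mult (Var Y) (Var Z)))]"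

definition Sigma_identities :: "(var3 trm \<times> var3 trm) list" where
  "Sigma_identities =
    [(Mult (Mult (Var X) (Var X)) (Var Y), Mult (Var X) (Var Y)),
     (Mult (Var X) (Mult (Var Y) (Var Y)), Mult (Var X) (Var Y)),
     (Mult (Mult (Var X) (Var Y)) (Var Z), Mult (Mult (Var X) (Var Z)) (Var Y)),
     (Mult (Var X) (Var X), Add (Mult (Var X) (Var X)) (Var X)),
     (Mult (Var X) (Var Y), Add (Mult (Var X) (Var Y)) (Mult (Mult (Var X) (Var Y)) (Var Z))),
     (Add (Var X) (Mult (Var Y) (Var Z)),
      Add (Add (Var X) (Mult (Var Y) (Var Z))) (Mult (Var Y) (Var X)))]"

lemma ai_semiring_iff_identities:
  "ai_semiring C p m \<longleftrightarrow> closed C p m \<and> (\<forall>(s, t)\<in>set ai_semiring_identities. satisfies C p m s t)"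
  by (simp add: ai_semiring_def closed_def ai_semiring_identities_def satisfies_var3) blast

lemma sat_Sigma_iff_identities:
  "sat_Sigma C p m \<longleftrightarrow> (\<forall>(s, t)\<in>set Sigma_identities. satisfies C p m s t)"
  by (simp add: sat_Sigma_def Sigma_identities_def satisfies_var3) blast

section \<open>Identities of S_(4,453) hold in HSP(S_(4,453))\<close>

lemma S4_ai_semiring: "ai_semiring S4 plus4 times4"
  unfolding ai_semiring_def S4_def plus4_def times4_def by simp

lemma S4_sat_Sigma: "sat_Sigma S4 plus4 times4"
  unfolding sat_Sigma_def S4_def plus4_def times4_def by simp

lemma S4_closed: "closed S4 plus4 times4"
  using S4_ai_semiring by (simp add: ai_semiring_iff_identities)

lemma eval_power:
  assumes "range \<phi> \<subseteq> extensional I"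
  shows "eval (pplus I) (ptimes I) \<phi> t = (\<lambda>i\<in>I. eval plus4 times4 (\<lambda>x. \<phi> x i) t)"
proof (induction t)
  case (Var x)
  have "\<phi> x \<in> extensional I" using assms by auto
  then show ?case by (simp add: extensional_restrict)
qed (auto simp: pplus_def ptimes_def)

lemma satisfies_power:
  fixes I :: "'i set" and s t :: "'v trm"
  assumes "satisfies S4 plus4 times4 s t"
  shows "satisfies (PiE I (\<lambda>_. S4)) (pplus I) (ptimes I) s t"
  unfolding satisfies_def
proof (intro allI impI)
  fix \<phi> :: "'v \<Rightarrow> 'i \<Rightarrow> nat" assume \<phi>: "range \<phi> \<subseteq> PiE I (\<lambda>_. S4)"
  then have ext: "range \<phi> \<subseteq> extensional I" by (auto simp: PiE_def)
  have "eval plus4 times4 (\<lambda>x. \<phi> x i) s = eval plus4 times4 (\<lambda>x. \<phi> x i) t" if "i \<in> I" for i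
  proof -
    have "range (\<lambda>x. \<phi> x i) \<subseteq> S4" using \<phi> that by (auto intro: PiE_mem)
    with assms show ?thesis by (simp add: satisfies_def)
  qed
  then show "eval (pplus I) (ptimes I) \<phi> s = eval (pplus I) (ptimes I) \<phi> t"
    unfolding eval_power[OF ext] by (rule restrict_ext)
qed

lemma satisfies_subset: "satisfies C p m s t \<Longrightarrow> B \<subseteq> C \<Longrightarrow> satisfies B p m s t"
  by (auto simp: satisfies_def)

lemma eval_hom:
  assumes "closed B p m" and "range \<phi> \<subseteq> B"
    and hom: "\<forall>f\<in>B. \<forall>g\<in>B. h (p f g) = q (h f) (h g) \<and> h (m f g) = n (h f) (h g)"
  shows "h (eval p m \<phi> t) = eval q n (h \<circ> \<phi>) t"
  by (induction t) (simp_all add: hom eval_closed[OF assms(1,2)])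

lemma closed_hom_image:
  assumes "closed B p m"
    and hom: "\<forall>f\<in>B. \<forall>g\<in>B. h (p f g) = q (h f) (h g) \<and> h (m f g) = n (h f) (h g)"
  shows "closed (h ` B) q n"
  unfolding closed_def
proof (intro ballI)
  fix x y assume "x \<in> h ` B" "y \<in> h ` B"
  then obtain f g where fg: "f \<in> B" "g \<in> B" and "x = h f" "y = h g" by blast
  then have "q x y = h (p f g)" and "n x y = h (m f g)" using hom by simp_all
  moreover have "p f g \<in> B" and "m f g \<in> B" using assms(1) fg by (simp_all add: closed_def)
  ultimately show "q x y \<in> h ` B \<and> n x y \<in> h ` B" by blast
qed

lemma satisfies_hom_image:
  fixes s t :: "'v trm"
  assumes "satisfies B p m s t" and "closed B p m"
    and hom: "\<forall>f\<in>B. \<forall>g\<in>B. h (p f g) = q (h f) (h g) \<and> h (m f g) = n (h f) (h g)"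
  shows "satisfies (h ` B) q n s t"
  unfolding satisfies_def
proof (intro allI impI)
  fix \<psi> :: "'v \<Rightarrow> _" assume \<psi>: "range \<psi> \<subseteq> h ` B"
  define \<phi> where "\<phi> x = inv_into B h (\<psi> x)" for x
  have \<phi>: "range \<phi> \<subseteq> B" using \<psi> by (auto simp: \<phi>_def inv_into_into)
  have h\<phi>: "h \<circ> \<phi> = \<psi>" using \<psi> by (auto simp: \<phi>_def f_inv_into_f range_subsetD)
  have "eval q n \<psi> s = h (eval p m \<phi> s)" by (simp add: eval_hom[OF assms(2) \<phi> hom] h\<phi>)
  also have "\<dots> = h (eval p m \<phi> t)" using assms(1) \<phi> by (simp add: satisfies_def)
  also have "\<dots> = eval q n \<psi> t" by (simp add: eval_hom[OF assms(2) \<phi> hom] h\<phi>)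
  finally show "eval q n \<psi> s = eval q n \<psi> t" .
qed

lemma hsp_image_closed:
  assumes "hsp_image I B h D q n"
  shows "closed D q n"
proof -
  have "closed B (pplus I) (ptimes I)"
    and "\<forall>f\<in>B. \<forall>g\<in>B. h (pplus I f g) = q (h f) (h g) \<and> h (ptimes I f g) = n (h f) (h g)"
    using assms by (simp_all add: hsp_image_def closed_def)
  from closed_hom_image[OF this] show ?thesis
    using assms by (simp add: hsp_image_def)
qed

lemma hsp_image_satisfies:
  assumes "hsp_image I B h D q n" and "satisfies S4 plus4 times4 s t"
  shows "satisfies D q n s t"
proof -
  have B: "B \<subseteq> PiE I (\<lambda>_. S4)" and closed: "closed B (pplus I) (ptimes I)"
    and hom: "\<forall>f\<in>B. \<forall>g\<in>B. h (pplus I f g) = q (h f) (h g) \<and> h (ptimes I f g) = n (h f) (h g)"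
    using assms(1) by (simp_all add: hsp_image_def closed_def)
  have "satisfies B (pplus I) (ptimes I) s t"
    using satisfies_subset[OF satisfies_power[OF assms(2)] B] .
  from satisfies_hom_image[OF this closed hom] show ?thesis
    using assms(1) by (simp add: hsp_image_def)
qed

lemma hsp_image_ai_semiring_Sigma:
  assumes "hsp_image I B h D q n"
  shows "ai_semiring D q n \<and> sat_Sigma D q n"
proof -
  have "satisfies S4 plus4 times4 s t"
    if "(s, t) \<in> set ai_semiring_identities \<union> set Sigma_identities" for s t
    using that S4_ai_semiring S4_sat_Sigma
    unfolding ai_semiring_iff_identities sat_Sigma_iff_identities by blast
  then show ?thesis
    unfolding ai_semiring_iff_identities sat_Sigma_iff_identities
    using hsp_image_closed[OF assms] hsp_image_satisfies[OF assms] by blast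
qed

section \<open>Monomial normal form in ai-semirings\<close>

fun foldr1 :: "('a \<Rightarrow> 'a \<Rightarrow> 'a) \<Rightarrow> 'a list \<Rightarrow> 'a" where
  "foldr1 f [] = undefined"
| "foldr1 f [x] = x"
| "foldr1 f (x # y # xs) = f x (foldr1 f (y # xs))"

lemma foldr1_Cons: "xs \<noteq> [] \<Longrightarrow> foldr1 f (x # xs) = f x (foldr1 f xs)"
  by (cases xs) auto

text \<open>A monomial x y_1 ... y_k is represented by the pair (x, [y_1, ..., y_k]).\<close>

definition monomial_mult :: "'v \<times> 'v list \<Rightarrow> 'v \<times> 'v list \<Rightarrow> 'v \<times> 'v list" where
  "monomial_mult \<mu> \<nu> = (fst \<mu>, snd \<mu> @ fst \<nu> # snd \<nu>)"

fun monomials :: "'v trm \<Rightarrow> ('v \<times> 'v list) list" where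
  "monomials (Var x) = [(x, [])]"
| "monomials (Add s t) = monomials s @ monomials t"
| "monomials (Mult s t) = [monomial_mult \<mu> \<nu>. \<mu> \<leftarrow> monomials s, \<nu> \<leftarrow> monomials t]"

fun monomial_value :: "('a \<Rightarrow> 'a \<Rightarrow> 'a) \<Rightarrow> ('v \<Rightarrow> 'a) \<Rightarrow> 'v \<times> 'v list \<Rightarrow> 'a" where
  "monomial_value m \<phi> (x, L) = foldl m (\<phi> x) (map \<phi> L)"

definition monomial_vars :: "'v \<times> 'v list \<Rightarrow> 'v set" where
  "monomial_vars \<mu> = set (fst \<mu> # snd \<mu>)"

lemma monomial_vars_mult: "monomial_vars (monomial_mult \<mu> \<nu>) = monomial_vars \<mu> \<union> monomial_vars \<nu>"
  by (auto simp: monomial_vars_def monomial_mult_def)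

lemma bex_monomials_Mult:
  "(\<exists>\<mu>\<in>set (monomials (Mult s t)). P \<mu>) \<longleftrightarrow>
    (\<exists>\<mu>\<in>set (monomials s). \<exists>\<nu>\<in>set (monomials t). P (monomial_mult \<mu> \<nu>))"
  by auto

lemma ball_monomials_Mult:
  "(\<forall>\<mu>\<in>set (monomials (Mult s t)). P \<mu>) \<longleftrightarrow>
    (\<forall>\<mu>\<in>set (monomials s). \<forall>\<nu>\<in>set (monomials t). P (monomial_mult \<mu> \<nu>))"
  by auto

lemma ex_mem_monomials: "\<exists>x L. (x, L) \<in> set (monomials t)"
  by (induction t) (fastforce simp: monomial_mult_def)+

lemma monomials_nonempty: "monomials t \<noteq> []"
  using ex_mem_monomials[of t] by auto

locale ais =
  fixes C :: "'a set" and p m :: "'a \<Rightarrow> 'a \<Rightarrow> 'a"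
  assumes ai_semiring: "ai_semiring C p m"
begin

lemma closed_carrier: "closed C p m"
  using ai_semiring by (simp add: ai_semiring_def closed_def)

lemma add_closed: "x \<in> C \<Longrightarrow> y \<in> C \<Longrightarrow> p x y \<in> C"
  using ai_semiring unfolding ai_semiring_def by blast

lemma mult_closed: "x \<in> C \<Longrightarrow> y \<in> C \<Longrightarrow> m x y \<in> C"
  using ai_semiring unfolding ai_semiring_def by blast

lemma add_idem: "x \<in> C \<Longrightarrow> p x x = x"
  using ai_semiring unfolding ai_semiring_def by blast

lemma add_commute: "x \<in> C \<Longrightarrow> y \<in> C \<Longrightarrow> p x y = p y x"
  using ai_semiring unfolding ai_semiring_def by blast

lemma add_assoc: "x \<in> C \<Longrightarrow> y \<in> C \<Longrightarrow> z \<in> C \<Longrightarrow> p (p x y) z = p x (p y z)"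
  using ai_semiring unfolding ai_semiring_def by blast

lemma mult_assoc: "x \<in> C \<Longrightarrow> y \<in> C \<Longrightarrow> z \<in> C \<Longrightarrow> m (m x y) z = m x (m y z)"
  using ai_semiring unfolding ai_semiring_def by blast

lemma distrib_left: "x \<in> C \<Longrightarrow> y \<in> C \<Longrightarrow> z \<in> C \<Longrightarrow> m x (p y z) = p (m x y) (m x z)"
  using ai_semiring unfolding ai_semiring_def by blast

lemma distrib_right: "x \<in> C \<Longrightarrow> y \<in> C \<Longrightarrow> z \<in> C \<Longrightarrow> m (p x y) z = p (m x z) (m y z)"
  using ai_semiring unfolding ai_semiring_def by blast

definition leq :: "'a \<Rightarrow> 'a \<Rightarrow> bool" (infix "\<preceq>" 50) where
  "a \<preceq> b \<longleftrightarrow> p a b = b"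

lemma leq_refl: "a \<in> C \<Longrightarrow> a \<preceq> a"
  by (simp add: leq_def add_idem)

lemma leq_trans:
  assumes "a \<in> C" "b \<in> C" "c \<in> C" "a \<preceq> b" "b \<preceq> c"
  shows "a \<preceq> c"
proof -
  have "p a c = p a (p b c)" using assms(5) by (simp add: leq_def)
  also have "\<dots> = p (p a b) c" using assms(1-3) by (simp add: add_assoc)
  finally show ?thesis using assms(4,5) by (simp add: leq_def)
qed

lemma leq_antisym: "a \<in> C \<Longrightarrow> b \<in> C \<Longrightarrow> a \<preceq> b \<Longrightarrow> b \<preceq> a \<Longrightarrow> a = b"
  using add_commute[of a b] by (simp add: leq_def)

lemma leq_add_left: "a \<in> C \<Longrightarrow> b \<in> C \<Longrightarrow> a \<preceq> p a b"
  by (simp add: leq_def add_assoc[symmetric] add_idem)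

lemma leq_add_right: "a \<in> C \<Longrightarrow> b \<in> C \<Longrightarrow> b \<preceq> p a b"
  using leq_add_left[of b a] add_commute[of a b] by simp

lemma add_leq: "a \<in> C \<Longrightarrow> b \<in> C \<Longrightarrow> c \<in> C \<Longrightarrow> a \<preceq> c \<Longrightarrow> b \<preceq> c \<Longrightarrow> p a b \<preceq> c"
  by (simp add: leq_def add_assoc)

lemma foldl_closed: "a \<in> C \<Longrightarrow> set L \<subseteq> C \<Longrightarrow> foldl m a L \<in> C"
  by (induction L arbitrary: a) (auto simp: mult_closed)

lemma mult_foldl: "a \<in> C \<Longrightarrow> b \<in> C \<Longrightarrow> set L \<subseteq> C \<Longrightarrow> m a (foldl m b L) = foldl m (m a b) L"
  by (induction L arbitrary: b) (auto simp: mult_closed mult_assoc)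

lemma foldr1_closed: "xs \<noteq> [] \<Longrightarrow> set xs \<subseteq> C \<Longrightarrow> foldr1 p xs \<in> C"
  by (induction xs rule: induct_list012) (auto simp: add_closed)

lemma foldr1_append:
  "xs \<noteq> [] \<Longrightarrow> ys \<noteq> [] \<Longrightarrow> set xs \<subseteq> C \<Longrightarrow> set ys \<subseteq> C \<Longrightarrow>
    foldr1 p (xs @ ys) = p (foldr1 p xs) (foldr1 p ys)"
  by (induction xs rule: induct_list012) (auto simp: foldr1_Cons add_assoc foldr1_closed)

lemma mult_foldr1: "xs \<noteq> [] \<Longrightarrow> set xs \<subseteq> C \<Longrightarrow> c \<in> C \<Longrightarrow> m c (foldr1 p xs) = foldr1 p (map (m c) xs)"
  by (induction xs rule: induct_list012) (auto simp: distrib_left foldr1_closed)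

lemma foldr1_mult:
  assumes "xs \<noteq> []" "ys \<noteq> []" "set xs \<subseteq> C" "set ys \<subseteq> C"
  shows "m (foldr1 p xs) (foldr1 p ys) = foldr1 p (concat (map (\<lambda>a. map (m a) ys) xs))"
  using assms
proof (induction xs rule: induct_list012)
  case (2 x)
  then show ?case by (simp add: mult_foldr1)
next
  case (3 x y xs)
  have "m (foldr1 p (x # y # xs)) (foldr1 p ys) =
      p (m x (foldr1 p ys)) (m (foldr1 p (y # xs)) (foldr1 p ys))"
    using 3 by (simp add: distrib_right foldr1_closed)
  also have "\<dots> = p (foldr1 p (map (m x) ys)) (foldr1 p (concat (map (\<lambda>a. map (m a) ys) (y # xs))))"
    using 3 by (simp add: mult_foldr1)
  also have "\<dots> = foldr1 p (map (m x) ys @ concat (map (\<lambda>a. map (m a) ys) (y # xs)))"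
    using 3 by (intro foldr1_append[symmetric]) (auto intro: mult_closed)
  finally show ?case by simp
qed simp

lemma mem_leq_foldr1: "a \<in> set xs \<Longrightarrow> set xs \<subseteq> C \<Longrightarrow> a \<preceq> foldr1 p xs"
proof (induction xs rule: induct_list012)
  case (3 x y zs)
  show ?case
  proof (cases "a = x")
    case True
    with 3 show ?thesis by (simp add: leq_add_left foldr1_closed)
  next
    case False
    have closed: "a \<in> C" "foldr1 p (y # zs) \<in> C" "foldr1 p (x # y # zs) \<in> C"
      using 3 by (auto simp del: foldr1.simps intro!: foldr1_closed)
    from 3 False have "a \<preceq> foldr1 p (y # zs)" and "foldr1 p (y # zs) \<preceq> foldr1 p (x # y # zs)"
      by (simp_all add: leq_add_right foldr1_closed)
    then show ?thesis by (rule leq_trans[OF closed])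
  qed
qed (simp_all add: leq_refl)

lemma foldr1_leq:
  "xs \<noteq> [] \<Longrightarrow> set xs \<subseteq> C \<Longrightarrow> c \<in> C \<Longrightarrow> (\<And>a. a \<in> set xs \<Longrightarrow> a \<preceq> c) \<Longrightarrow> foldr1 p xs \<preceq> c"
  by (induction xs rule: induct_list012) (auto simp: add_leq foldr1_closed)

lemma monomial_value_closed: "range \<phi> \<subseteq> C \<Longrightarrow> monomial_value m \<phi> \<mu> \<in> C"
  by (cases \<mu>) (auto simp: image_subset_iff intro!: foldl_closed)

lemma monomial_value_mult:
  assumes "range \<phi> \<subseteq> C"
  shows "monomial_value m \<phi> (monomial_mult \<mu> \<nu>) = m (monomial_value m \<phi> \<mu>) (monomial_value m \<phi> \<nu>)"
proof -
  obtain x L where "\<mu> = (x, L)" by (rule prod.exhaust)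
  moreover obtain y L' where "\<nu> = (y, L')" by (rule prod.exhaust)
  moreover note monomial_mult_def[simp]
  moreover have "foldl m (\<phi> x) (map \<phi> L) \<in> C" and "\<phi> y \<in> C" and "set (map \<phi> L') \<subseteq> C"
    using assms by (auto simp: image_subset_iff intro!: foldl_closed)
  ultimately show ?thesis by (simp add: mult_foldl)
qed

lemma eval_eq_sum_monomials:
  assumes "range \<phi> \<subseteq> C"
  shows "eval p m \<phi> t = foldr1 p (map (monomial_value m \<phi>) (monomials t))"
proof (induction t)
  case (Add s t)
  then show ?case
    using assms monomials_nonempty[of s] monomials_nonempty[of t]
    by (simp add: foldr1_append monomial_value_closed image_subset_iff)
next
  case (Mult s t)
  let ?vs = "map (monomial_value m \<phi>) (monomials s)"
    and ?vt = "map (monomial_value m \<phi>) (monomials t)"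
  have "map (monomial_value m \<phi>) (monomials (Mult s t)) = concat (map (\<lambda>a. map (m a) ?vt) ?vs)"
    using assms by (simp add: map_concat monomial_value_mult comp_def)
  then show ?case
    using Mult assms monomials_nonempty[of s] monomials_nonempty[of t]
    by (simp add: foldr1_mult monomial_value_closed image_subset_iff)
qed simp

lemma monomial_value_leq_eval:
  assumes "range \<phi> \<subseteq> C" and "\<mu> \<in> set (monomials t)"
  shows "monomial_value m \<phi> \<mu> \<preceq> eval p m \<phi> t"
  unfolding eval_eq_sum_monomials[OF assms(1)]
  using assms by (auto intro!: mem_leq_foldr1 monomial_value_closed)

lemma eval_leq_if_monomial_values_leq:
  assumes "range \<phi> \<subseteq> C" and "c \<in> C"
    and "\<And>\<mu>. \<mu> \<in> set (monomials t) \<Longrightarrow> monomial_value m \<phi> \<mu> \<preceq> c"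
  shows "eval p m \<phi> t \<preceq> c"
  unfolding eval_eq_sum_monomials[OF assms(1)]
  using assms monomial_value_closed[OF assms(1)]
  by (auto simp: monomials_nonempty intro!: foldr1_leq)

end

section \<open>Identities of S_(4,453) seen on monomials\<close>

lemma S4_table_laws:
  assumes "a \<in> S4" "b \<in> S4"
  shows "plus4 a b = 2 \<longleftrightarrow> a = 2 \<and> b = 2" and "times4 a b = 2 \<longleftrightarrow> a = 2"
    and "plus4 a b \<in> {1, 3} \<longleftrightarrow> a \<in> {1, 3} \<or> b \<in> {1, 3}"
    and "times4 a b \<in> {1, 3} \<longleftrightarrow> a \<in> {1, 3} \<and> b \<in> {1, 3}"
    and "plus4 a b \<in> {1, 4} \<longleftrightarrow> a \<in> {1, 4} \<or> b \<in> {1, 4}"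
    and "times4 a b \<in> {1, 4} \<longleftrightarrow> a \<noteq> 2"
  using assms by (auto simp: S4_def plus4_def times4_def)

lemma eval_S4_eq_2:
  assumes "range \<psi> \<subseteq> S4"
  shows "eval plus4 times4 \<psi> t = 2 \<longleftrightarrow> (\<forall>\<mu>\<in>set (monomials t). \<psi> (fst \<mu>) = 2)"
proof (induction t)
  case (Var x)
  then show ?case by simp
next
  case (Add s t)
  have "eval plus4 times4 \<psi> (Add s t) = 2 \<longleftrightarrow> eval plus4 times4 \<psi> s = 2 \<and> eval plus4 times4 \<psi> t = 2"
    unfolding eval.simps by (rule S4_table_laws(1)) (rule eval_closed[OF S4_closed assms])+
  with Add.IH show ?case by (simp add: ball_Un)
next
  case (Mult s t)
  have "eval plus4 times4 \<psi> (Mult s t) = 2 \<longleftrightarrow> eval plus4 times4 \<psi> s = 2"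
    unfolding eval.simps by (rule S4_table_laws(2)) (rule eval_closed[OF S4_closed assms])+
  with Mult.IH(1) ex_mem_monomials[of t] show ?case
    by (simp add: ball_monomials_Mult monomial_mult_def)
qed

lemma eval_S4_in_13:
  assumes "range \<psi> \<subseteq> S4"
  shows "eval plus4 times4 \<psi> t \<in> {1, 3} \<longleftrightarrow> (\<exists>\<mu>\<in>set (monomials t). \<psi> ` monomial_vars \<mu> \<subseteq> {1, 3})"
proof (induction t)
  case (Var x)
  then show ?case by (simp add: monomial_vars_def)
next
  case (Add s t)
  have "eval plus4 times4 \<psi> (Add s t) \<in> {1, 3} \<longleftrightarrow>
      eval plus4 times4 \<psi> s \<in> {1, 3} \<or> eval plus4 times4 \<psi> t \<in> {1, 3}"
    unfolding eval.simps by (rule S4_table_laws(3)) (rule eval_closed[OF S4_closed assms])+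
  with Add.IH show ?case by (simp add: bex_Un)
next
  case (Mult s t)
  have "eval plus4 times4 \<psi> (Mult s t) \<in> {1, 3} \<longleftrightarrow>
      eval plus4 times4 \<psi> s \<in> {1, 3} \<and> eval plus4 times4 \<psi> t \<in> {1, 3}"
    unfolding eval.simps by (rule S4_table_laws(4)) (rule eval_closed[OF S4_closed assms])+
  with Mult.IH show ?case by (simp add: bex_monomials_Mult monomial_vars_mult image_Un)
qed

lemma eval_S4_in_14:
  assumes "range \<psi> \<subseteq> S4"
  shows "eval plus4 times4 \<psi> t \<in> {1, 4} \<longleftrightarrow>
    (\<exists>\<mu>\<in>set (monomials t). if snd \<mu> = [] then \<psi> (fst \<mu>) \<in> {1, 4} else \<psi> (fst \<mu>) \<noteq> 2)"
proof (induction t)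
  case (Var x)
  then show ?case by simp
next
  case (Add s t)
  have "eval plus4 times4 \<psi> (Add s t) \<in> {1, 4} \<longleftrightarrow>
      eval plus4 times4 \<psi> s \<in> {1, 4} \<or> eval plus4 times4 \<psi> t \<in> {1, 4}"
    unfolding eval.simps by (rule S4_table_laws(5)) (rule eval_closed[OF S4_closed assms])+
  with Add.IH show ?case by (simp only: monomials.simps set_append bex_Un)
next
  case (Mult s t)
  have "eval plus4 times4 \<psi> (Mult s t) \<in> {1, 4} \<longleftrightarrow> eval plus4 times4 \<psi> s \<noteq> 2"
    unfolding eval.simps by (rule S4_table_laws(6)) (rule eval_closed[OF S4_closed assms])+
  with ex_mem_monomials[of t] show ?case
    by (simp add: eval_S4_eq_2[OF assms] bex_monomials_Mult monomial_mult_def)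
qed

lemma S4_identity_monomials:
  assumes "satisfies S4 plus4 times4 s t" and "(x, L) \<in> set (monomials t)"
  shows "\<exists>\<nu>\<in>set (monomials s). monomial_vars \<nu> \<subseteq> monomial_vars (x, L)"
    and "L \<noteq> [] \<Longrightarrow> \<exists>S. (x, S) \<in> set (monomials s) \<and> S \<noteq> []"
proof -
  define \<psi> where "\<psi> v = (if v \<in> monomial_vars (x, L) then 3 else 2 :: nat)" for v
  have "range \<psi> \<subseteq> S4" by (auto simp: \<psi>_def S4_def)
  moreover have "eval plus4 times4 \<psi> t \<in> {1, 3}"
    using assms(2) by (subst eval_S4_in_13[OF \<open>range \<psi> \<subseteq> S4\<close>]) (auto simp: \<psi>_def)
  ultimately have "eval plus4 times4 \<psi> s \<in> {1, 3}"
    using assms(1) by (simp add: satisfies_def)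
  then obtain \<nu> where \<nu>: "\<nu> \<in> set (monomials s)" and "\<psi> ` monomial_vars \<nu> \<subseteq> {1, 3}"
    using eval_S4_in_13[OF \<open>range \<psi> \<subseteq> S4\<close>] by blast
  then have "monomial_vars \<nu> \<subseteq> monomial_vars (x, L)"
    by (force simp: \<psi>_def split: if_splits)
  with \<nu> show "\<exists>\<nu>\<in>set (monomials s). monomial_vars \<nu> \<subseteq> monomial_vars (x, L)" ..
next
  assume "L \<noteq> []"
  define \<psi> where "\<psi> v = (if v = x then 3 else 2 :: nat)" for v
  have "range \<psi> \<subseteq> S4" by (auto simp: \<psi>_def S4_def)
  moreover have "eval plus4 times4 \<psi> t \<in> {1, 4}"
    unfolding eval_S4_in_14[OF \<open>range \<psi> \<subseteq> S4\<close>]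
    using assms(2) \<open>L \<noteq> []\<close> by (auto simp: \<psi>_def intro!: bexI[of _ "(x, L)"])
  ultimately have "eval plus4 times4 \<psi> s \<in> {1, 4}"
    using assms(1) by (simp add: satisfies_def)
  then obtain \<nu> where "\<nu> \<in> set (monomials s)"
    and "if snd \<nu> = [] then \<psi> (fst \<nu>) \<in> {1, 4} else \<psi> (fst \<nu>) \<noteq> 2"
    using eval_S4_in_14[OF \<open>range \<psi> \<subseteq> S4\<close>] by blast
  moreover obtain y S where "\<nu> = (y, S)" by (rule prod.exhaust)
  ultimately have "(y, S) \<in> set (monomials s)" and "y = x" and "S \<noteq> []"
    by (auto simp: \<psi>_def split: if_splits)
  then show "\<exists>S. (x, S) \<in> set (monomials s) \<and> S \<noteq> []" by blast
qed

section \<open>Models of Sigma satisfy the identities of S_(4,453)\<close>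

locale Sigma_model = ais +
  assumes sat_Sigma: "sat_Sigma C p m"
begin

lemma square_mult: "x \<in> C \<Longrightarrow> y \<in> C \<Longrightarrow> m (m x x) y = m x y"
  using sat_Sigma unfolding sat_Sigma_def by blast

lemma mult_square: "x \<in> C \<Longrightarrow> y \<in> C \<Longrightarrow> m x (m y y) = m x y"
  using sat_Sigma unfolding sat_Sigma_def by blast

lemma mult_right_commute: "x \<in> C \<Longrightarrow> y \<in> C \<Longrightarrow> z \<in> C \<Longrightarrow> m (m x y) z = m (m x z) y"
  using sat_Sigma unfolding sat_Sigma_def by blast

lemma leq_square: "x \<in> C \<Longrightarrow> x \<preceq> m x x"
  using sat_Sigma add_commute[OF _ mult_closed] unfolding sat_Sigma_def leq_def by metis

lemma mult_mult_leq: "x \<in> C \<Longrightarrow> y \<in> C \<Longrightarrow> z \<in> C \<Longrightarrow> m (m x y) z \<preceq> m x y"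
  using sat_Sigma add_commute[OF mult_closed[OF mult_closed] mult_closed]
  unfolding sat_Sigma_def leq_def by metis

lemma mult_leq_add: "x \<in> C \<Longrightarrow> y \<in> C \<Longrightarrow> z \<in> C \<Longrightarrow> m y x \<preceq> p x (m y z)"
  using sat_Sigma add_commute[OF mult_closed add_closed[OF _ mult_closed]]
  unfolding sat_Sigma_def leq_def by metis

lemma foldl_mult_right_commute:
  "w \<in> C \<Longrightarrow> a \<in> C \<Longrightarrow> set L \<subseteq> C \<Longrightarrow> foldl m (m w a) L = m (foldl m w L) a"
  by (induction L arbitrary: w) (auto simp: mult_right_commute mult_closed)

lemma foldl_foldl_commute:
  "u \<in> C \<Longrightarrow> set A \<subseteq> C \<Longrightarrow> set B \<subseteq> C \<Longrightarrow> foldl m (foldl m u A) B = foldl m (foldl m u B) A"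
proof (induction B arbitrary: u)
  case (Cons b B)
  have "foldl m (foldl m u A) (b # B) = foldl m (foldl m (m u b) A) B"
    using Cons.prems by (simp add: foldl_mult_right_commute)
  also have "\<dots> = foldl m (foldl m (m u b) B) A"
    using Cons by (simp add: mult_closed)
  finally show ?case by simp
qed simp

lemma foldl_mult_mem:
  assumes "u \<in> C" "set L \<subseteq> C" "a \<in> set L"
  shows "m (foldl m u L) a = foldl m u L"
proof -
  obtain L1 L2 where L: "L = L1 @ a # L2" using assms(3) by (meson split_list)
  have "foldl m u L1 \<in> C" "a \<in> C" "set L2 \<subseteq> C" using assms L by (auto intro!: foldl_closed)
  then show ?thesis
    using L by (simp add: foldl_mult_right_commute[symmetric] mult_closed mult_assoc mult_square)
qed

lemma foldl_foldl_subset: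
  "u \<in> C \<Longrightarrow> set L \<subseteq> C \<Longrightarrow> set L' \<subseteq> set L \<Longrightarrow> foldl m (foldl m u L) L' = foldl m u L"
  by (induction L') (auto simp: foldl_mult_mem)

lemma foldl_mult_leq: "x \<in> C \<Longrightarrow> c \<in> C \<Longrightarrow> set L \<subseteq> C \<Longrightarrow> foldl m (m x c) L \<preceq> m x c"
proof (induction L arbitrary: x c)
  case Nil
  then show ?case by (simp add: leq_refl mult_closed)
next
  case (Cons l L)
  then have "foldl m (m (m x c) l) L \<preceq> m (m x c) l" and "m (m x c) l \<preceq> m x c"
    by (simp_all add: mult_closed mult_mult_leq)
  moreover have "foldl m (m (m x c) l) L \<in> C" "m (m x c) l \<in> C" "m x c \<in> C"
    using Cons.prems by (auto intro!: foldl_closed mult_closed)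
  ultimately show ?case by (simp add: leq_trans[of _ "m (m x c) l"])
qed

lemma foldl_leq_subset:
  assumes "u \<in> C" "set L \<subseteq> C" "L' \<noteq> []" "set L' \<subseteq> set L"
  shows "foldl m u L \<preceq> foldl m u L'"
proof -
  obtain L0 c where L': "L' = L0 @ [c]" using assms(3) by (cases L' rule: rev_cases) auto
  have "set L' \<subseteq> C" using assms by auto
  have "foldl m u L = foldl m (foldl m u L) L'" using assms by (simp add: foldl_foldl_subset)
  also have "\<dots> = foldl m (foldl m u L') L"
    using assms \<open>set L' \<subseteq> C\<close> by (simp add: foldl_foldl_commute)
  also have "\<dots> = foldl m (m (foldl m u L0) c) L"
    using L' by simp
  also have "\<dots> \<preceq> m (foldl m u L0) c"
    using assms \<open>set L' \<subseteq> C\<close> L' by (intro foldl_mult_leq) (auto intro!: foldl_closed)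
  finally show ?thesis using L' by simp
qed

lemma foldl_Cons_self: "x \<in> C \<Longrightarrow> set L \<subseteq> C \<Longrightarrow> L \<noteq> [] \<Longrightarrow> foldl m x (x # L) = foldl m x L"
  by (cases L) (auto simp: square_mult)

lemma leq_foldl_self:
  assumes "a \<in> C" "set T \<subseteq> {a}"
  shows "a \<preceq> foldl m a T"
proof (cases "T = []")
  case True
  then show ?thesis using assms by (simp add: leq_refl)
next
  case False
  have "m a a \<preceq> foldl m a T"
    using assms False foldl_leq_subset[of a "[a]" T] by simp
  moreover have "m a a \<in> C" "foldl m a T \<in> C"
    using assms by (auto intro!: foldl_closed mult_closed)
  ultimately show ?thesis
    using leq_trans[OF assms(1) _ _ leq_square[OF assms(1)]] by simp
qed

lemma foldl_leq_add:
  assumes "a \<in> C" "set L \<subseteq> C" "L \<noteq> []" "b \<in> C" "set T \<subseteq> C" "set (b # T) \<subseteq> set (a # L)"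
    and "set S \<subseteq> C" "S \<noteq> []"
  shows "foldl m a L \<preceq> p (foldl m b T) (foldl m a S)"
proof -
  obtain c S' where S: "S = c # S'" using assms(8) by (cases S) auto
  have closed: "foldl m b T \<in> C" "foldl m c S' \<in> C" "foldl m a L \<in> C"
    using assms S by (auto intro: foldl_closed)
  have "foldl m a (a # L) \<preceq> foldl m a (b # T)"
    using assms by (intro foldl_leq_subset) auto
  moreover have "foldl m a (b # T) = m a (foldl m b T)"
    using assms by (simp add: mult_foldl)
  ultimately have "foldl m a L \<preceq> m a (foldl m b T)"
    unfolding foldl_Cons_self[OF assms(1-3)] by simp
  moreover have "m a (foldl m b T) \<preceq> p (foldl m b T) (foldl m a S)"
    using mult_leq_add[OF closed(1) assms(1) closed(2)] assms S by (simp add: mult_foldl)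
  moreover have "m a (foldl m b T) \<in> C" "p (foldl m b T) (foldl m a S) \<in> C"
    using assms closed by (auto intro!: mult_closed add_closed foldl_closed)
  ultimately show ?thesis
    using leq_trans[OF closed(3), of "m a (foldl m b T)"] by simp
qed

lemma monomial_leq_eval:
  assumes "satisfies S4 plus4 times4 s t" and "range \<phi> \<subseteq> C" and "\<mu> \<in> set (monomials t)"
  shows "monomial_value m \<phi> \<mu> \<preceq> eval p m \<phi> s"
proof -
  obtain x L where \<mu>: "\<mu> = (x, L)" by (rule prod.exhaust)
  have \<phi>: "\<phi> v \<in> C" "set (map \<phi> L') \<subseteq> C" for v L' using assms(2) by auto
  note closed = monomial_value_closed[OF assms(2)] eval_closed[OF closed_carrier assms(2)]
  obtain \<nu> where "\<nu> \<in> set (monomials s)" "monomial_vars \<nu> \<subseteq> monomial_vars (x, L)"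
    using S4_identity_monomials(1)[OF assms(1) assms(3)[unfolded \<mu>]] by blast
  moreover obtain y T where "\<nu> = (y, T)" by (rule prod.exhaust)
  ultimately have yT: "(y, T) \<in> set (monomials s)" "monomial_vars (y, T) \<subseteq> monomial_vars (x, L)"
    by simp_all
  show ?thesis
  proof (cases "L = []")
    case True
    with yT(2) have "y = x" and "set (map \<phi> T) \<subseteq> {\<phi> x}" by (auto simp: monomial_vars_def)
    then have "monomial_value m \<phi> \<mu> \<preceq> monomial_value m \<phi> (y, T)"
      using \<phi> \<mu> True by (simp add: leq_foldl_self)
    then show ?thesis
      using monomial_value_leq_eval[OF assms(2) yT(1)]
      by (rule leq_trans[OF closed(1) closed(1) closed(2)])
  next
    case False
    obtain S where xS: "(x, S) \<in> set (monomials s)" and "S \<noteq> []"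
      using S4_identity_monomials(2)[OF assms(1) assms(3)[unfolded \<mu>] False] by blast
    let ?u = "p (monomial_value m \<phi> (y, T)) (monomial_value m \<phi> (x, S))"
    have "set (\<phi> y # map \<phi> T) \<subseteq> set (\<phi> x # map \<phi> L)"
      using image_mono[OF yT(2), of \<phi>] by (simp add: monomial_vars_def)
    then have "monomial_value m \<phi> \<mu> \<preceq> ?u"
      using foldl_leq_add[OF \<phi>(1) \<phi>(2) _ \<phi>(1) \<phi>(2) _ \<phi>(2)] False \<open>S \<noteq> []\<close> \<mu> by simp
    moreover have "?u \<preceq> eval p m \<phi> s"
      using monomial_value_leq_eval[OF assms(2) yT(1)] monomial_value_leq_eval[OF assms(2) xS]
      by (rule add_leq[OF closed(1) closed(1) closed(2)])
    moreover have "?u \<in> C" by (rule add_closed[OF closed(1) closed(1)])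
    ultimately show ?thesis by (rule leq_trans[OF closed(1) _ closed(2), rotated])
  qed
qed

lemma eval_leq_if_S4_identity:
  assumes "satisfies S4 plus4 times4 s t" and "range \<phi> \<subseteq> C"
  shows "eval p m \<phi> t \<preceq> eval p m \<phi> s"
  using assms eval_closed[OF closed_carrier assms(2)]
  by (auto intro!: eval_leq_if_monomial_values_leq monomial_leq_eval)

theorem satisfies_if_S4_identity:
  fixes s t :: "'v trm"
  assumes "satisfies S4 plus4 times4 s t"
  shows "satisfies C p m s t"
  unfolding satisfies_def
proof (intro allI impI)
  fix \<phi> :: "'v \<Rightarrow> 'a" assume "range \<phi> \<subseteq> C"
  moreover have "satisfies S4 plus4 times4 t s" using assms by (simp add: satisfies_def)
  ultimately show "eval p m \<phi> s = eval p m \<phi> t"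
    using assms by (intro leq_antisym eval_closed[OF closed_carrier] eval_leq_if_S4_identity)
qed

end

section \<open>Free algebras of V(S_(4,453))\<close>

definition S4_assignments :: "('v \<Rightarrow> nat) set" where
  "S4_assignments = {\<psi>. range \<psi> \<subseteq> S4}"

definition term_function :: "'v trm \<Rightarrow> ('v \<Rightarrow> nat) \<Rightarrow> nat" where
  "term_function t = (\<lambda>\<psi>\<in>S4_assignments. eval plus4 times4 \<psi> t)"

lemma term_function_Add:
  "term_function (Add s t) = pplus S4_assignments (term_function s) (term_function t)"
  by (auto simp: term_function_def pplus_def)

lemma term_function_Mult:
  "term_function (Mult s t) = ptimes S4_assignments (term_function s) (term_function t)"
  by (auto simp: term_function_def ptimes_def)

lemma term_function_in_power: "term_function t \<in> PiE S4_assignments (\<lambda>_. S4)"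
  using eval_closed[OF S4_closed] by (auto simp: term_function_def S4_assignments_def)

lemma satisfies_if_term_function_eq:
  fixes s t :: "'v trm"
  assumes "term_function s = term_function t"
  shows "satisfies S4 plus4 times4 s t"
  unfolding satisfies_def
proof (intro allI impI)
  fix \<psi> :: "'v \<Rightarrow> nat" assume "range \<psi> \<subseteq> S4"
  then show "eval plus4 times4 \<psi> s = eval plus4 times4 \<psi> t"
    using fun_cong[OF assms, of \<psi>] by (simp add: term_function_def S4_assignments_def)
qed

lemma term_functions_closed:
  "closed (term_function ` {t. vars t \<subseteq> V}) (pplus S4_assignments) (ptimes S4_assignments)"
  unfolding closed_def
proof (intro ballI)
  fix F G assume "F \<in> term_function ` {t. vars t \<subseteq> V}" "G \<in> term_function ` {t. vars t \<subseteq> V}"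
  then obtain s t where "vars s \<subseteq> V" "vars t \<subseteq> V" "F = term_function s" "G = term_function t"
    by blast
  then show "pplus S4_assignments F G \<in> term_function ` {t. vars t \<subseteq> V} \<and>
      ptimes S4_assignments F G \<in> term_function ` {t. vars t \<subseteq> V}"
    by (auto simp: term_function_Add[symmetric] term_function_Mult[symmetric])
qed

text \<open>The term functions over the variables C form the free algebra of V(S_(4,453)) on C;
  evaluation in C is well defined on them because C satisfies every identity of S_(4,453).\<close>

lemma hsp_image_if_S4_identities:
  fixes C :: "'a set" and p m :: "'a \<Rightarrow> 'a \<Rightarrow> 'a"
  assumes "closed C p m"
    and S4_identities: "\<And>s t :: 'a trm. satisfies S4 plus4 times4 s t \<Longrightarrow> satisfies C p m s t"
  shows "\<exists>(J :: ('a \<Rightarrow> nat) set) B h. hsp_image J B h C p m"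
proof -
  define T where "T = {t :: 'a trm. vars t \<subseteq> C}"
  define h where "h F = eval p m id (inv_into T term_function F)" for F
  have h_term_function: "h (term_function t) = eval p m id t" if "t \<in> T" for t
  proof -
    let ?t' = "inv_into T term_function (term_function t)"
    have "?t' \<in> T" and "term_function ?t' = term_function t"
      using that by (auto intro: inv_into_into f_inv_into_f)
    then show ?thesis
      using S4_identities[OF satisfies_if_term_function_eq] that
      unfolding h_def T_def by (auto intro: satisfies_eval_id)
  qed
  have "term_function ` T \<subseteq> PiE S4_assignments (\<lambda>_. S4)"
    using term_function_in_power by blast
  moreover have
      "h (pplus S4_assignments (term_function s) (term_function t)) =
        p (h (term_function s)) (h (term_function t))"
    and "h (ptimes S4_assignments (term_function s) (term_function t)) =
        m (h (term_function s)) (h (term_function t))"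
    if "s \<in> T" "t \<in> T" for s t
    using that
    by (simp_all add: T_def term_function_Add[symmetric] term_function_Mult[symmetric] h_term_function)
  moreover have "h ` term_function ` T = C"
  proof
    show "h ` term_function ` T \<subseteq> C"
      using eval_closed_on[OF assms(1), of id] by (auto simp: h_term_function T_def)
    show "C \<subseteq> h ` term_function ` T"
    proof
      fix c assume "c \<in> C"
      then have "Var c \<in> T" and "h (term_function (Var c)) = c"
        by (simp_all add: T_def h_term_function)
      then show "c \<in> h ` term_function ` T" by (metis image_eqI)
    qed
  qed
  ultimately have "hsp_image S4_assignments (term_function ` T) h C p m"
    using term_functions_closed[of C] unfolding hsp_image_def closed_def T_def by blast
  then show ?thesis by blast
qed

theorem proposition4p2:
  fixes I :: "'i set" and B :: "('i \<Rightarrow> nat) set" and h :: "('i \<Rightarrow> nat) \<Rightarrow> 'b"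
    and D :: "'b set" and q n :: "'b \<Rightarrow> 'b \<Rightarrow> 'b"
    and C :: "'a set" and p m :: "'a \<Rightarrow> 'a \<Rightarrow> 'a"
  shows "(hsp_image I B h D q n \<longrightarrow> ai_semiring D q n \<and> sat_Sigma D q n)
       \<and> (ai_semiring C p m \<and> sat_Sigma C p m \<longrightarrow>
            (\<exists>(J :: ('a \<Rightarrow> nat) set) B' h'. hsp_image J B' h' C p m))"
proof (rule conjI)
  show "hsp_image I B h D q n \<longrightarrow> ai_semiring D q n \<and> sat_Sigma D q n"
    using hsp_image_ai_semiring_Sigma by blast
  show "ai_semiring C p m \<and> sat_Sigma C p m \<longrightarrow>
      (\<exists>(J :: ('a \<Rightarrow> nat) set) B' h'. hsp_image J B' h' C p m)"
  proof
    assume "ai_semiring C p m \<and> sat_Sigma C p m"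
    then interpret Sigma_model C p m by unfold_locales auto
    show "\<exists>(J :: ('a \<Rightarrow> nat) set) B' h'. hsp_image J B' h' C p m"
      using closed_carrier satisfies_if_S4_identity by (rule hsp_image_if_S4_identities)
  qed
qed

end
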